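(* Let $(\mathcal A,\mathcal B_{\mathcal A})$ be a measurable space, $\mathbb P_{\mathcal A}$ the space of probability measures on it with the $\sigma$-field $\mathbb F_{\mathcal A}$ generated by the sets $\{\chi:\chi(A)<r\}$, $A\in\mathcal B_{\mathcal A}$, $r\in[0,1]$. Let $(\eta,X)$ be a jointly distributed pair with $X$ a $[0,1]$-valued random variable and $\eta$ a random element of $\mathbb P_{\mathcal A}$. If $\mathbb P(X=0)<1$, then there exists a random element $\chi$ of $\mathbb P_{\mathcal A}$, unique in law, such that $\chi\overset d=X\eta+(1-X)\tilde\chi$, where $\tilde\chi$ has the same law as $\chi$ and is independent of $(\eta,X)$. *)

theory Defs
  imports "HOL-Probability.Probability"
begin

definition mix_measure :: "'a measure \<Rightarrow> real \<Rightarrow> 'a measure \<Rightarrow> 'a measure \<Rightarrow> 'a measure" where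
  "mix_measure M x e v = measure_of (space M) (sets M)
     (\<lambda>A. ennreal x * emeasure e A + ennreal (1 - x) * emeasure v A)"

end

theory Submission
  imports Defs
begin

(* Existence: for an i.i.d. sequence (\<eta>_i, X_i) distributed like (\<eta>, X), the stick-breaking
   random measure \<chi> = \<Sum>_i X_i \<Prod>_{j<i} (1 - X_j) \<eta>_i satisfies \<chi> = X_0 \<eta>_0 + (1 - X_0) \<chi>',
   where \<chi>' is the same functional of the shifted sequence, which is independent of
   (\<eta>_0, X_0) and distributed like \<chi>; so the law of \<chi> solves the equation.

   Uniqueness: two solutions can be coupled, and feeding both coordinates of a coupling
   through the equation with the same (\<eta>, X) multiplies the discrepancy
   \<Sum>_{A\<in>H} |\<chi>_1(A) - \<chi>_2(A)| by 1 - X, hence its expectation by E(1 - X) < 1.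
   Iterating gives couplings with arbitrarily small expected discrepancy, and Markov's
   inequality then shows that both laws agree on the sets {\<chi>. \<chi>(A) < r for all (A, r) \<in> H},
   which form an \<inter>-stable generator of the \<sigma>-algebra on probability measures. *)

abbreviation unit_interval :: "real measure" where
  "unit_interval \<equiv> restrict_space borel {0..1}"

lemma measurable_unit_interval_ident [measurable]: "(\<lambda>x. x) \<in> unit_interval \<rightarrow>\<^sub>M borel"
  by (rule measurable_restrict_space1) simp

lemma space_prob_algebra_unit_interval:
  "space (prob_algebra M \<Otimes>\<^sub>M unit_interval) = space (prob_algebra M) \<times> {0..1}"
  by (simp add: space_pair_measure space_restrict_space)

lemma suminf_commute_ennreal:
  fixes f :: "nat \<Rightarrow> nat \<Rightarrow> ennreal"
  shows "(\<Sum>i. \<Sum>j. f i j) = (\<Sum>j. \<Sum>i. f i j)"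
proof -
  have "(\<Sum>i. \<Sum>j. f i j) = (\<Sum>i. \<integral>\<^sup>+j. f i j \<partial>count_space UNIV)"
    by (simp add: nn_integral_count_space_nat)
  also have "\<dots> = (\<integral>\<^sup>+j. (\<Sum>i. f i j) \<partial>count_space UNIV)"
    by (rule nn_integral_suminf[symmetric]) auto
  also have "\<dots> = (\<Sum>j. \<Sum>i. f i j)"
    by (simp add: nn_integral_count_space_nat)
  finally show ?thesis .
qed

lemma suminf_ennreal_split_head: "(\<Sum>i. f i) = f 0 + (\<Sum>i. f (Suc i) :: ennreal)"
  using suminf_offset[of f 1] by (simp add: add.commute)

lemma ennreal_one_minus_convex_combination:
  fixes a :: real and w :: ennreal
  assumes a: "a \<in> {0..1}" and w: "w \<le> 1"
  shows "1 - (ennreal a + ennreal (1 - a) * w) = ennreal (1 - a) * (1 - w)"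
proof -
  obtain r where r: "w = ennreal r" "0 \<le> r" "r \<le> 1"
    using w by (cases w) (auto simp: ennreal_le_1 top_unique)
  have "ennreal a + ennreal (1 - a) * w = ennreal (a + (1 - a) * r)"
    using a r by (simp add: ennreal_mult ennreal_plus)
  moreover have "1 - ennreal (a + (1 - a) * r) = ennreal (1 - (a + (1 - a) * r))"
    using a r by (metis ennreal_1 ennreal_minus add_nonneg_nonneg mult_nonneg_nonneg diff_ge_0_iff_ge atLeastAtMost_iff)
  moreover have "1 - w = ennreal (1 - r)"
    using r by (metis ennreal_1 ennreal_minus)
  moreover have "ennreal (1 - a) * ennreal (1 - r) = ennreal ((1 - a) * (1 - r))"
    using a r by (simp add: ennreal_mult)
  ultimately show ?thesis
    by (simp add: algebra_simps)
qed

lemma emeasure_distr_eq_nn_integral: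
  assumes "f \<in> N \<rightarrow>\<^sub>M K" and "B \<in> sets K"
  shows "emeasure (distr N K f) B = (\<integral>\<^sup>+x. indicator B (f x) \<partial>N)"
proof -
  have "emeasure (distr N K f) B = (\<integral>\<^sup>+x. indicator B x \<partial>distr N K f)"
    using assms(2) by simp
  also have "\<dots> = (\<integral>\<^sup>+x. indicator B (f x) \<partial>N)"
    using assms by (intro nn_integral_distr) auto
  finally show ?thesis .
qed

definition countable_mixture :: "'a measure \<Rightarrow> (nat \<Rightarrow> ennreal) \<Rightarrow> (nat \<Rightarrow> 'a measure) \<Rightarrow> 'a measure" where
  "countable_mixture M w K = measure_of (space M) (sets M) (\<lambda>A. \<Sum>i. w i * emeasure (K i) A)"

lemma sets_countable_mixture [simp]: "sets (countable_mixture M w K) = sets M"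
  by (simp add: countable_mixture_def)

lemma space_countable_mixture [simp]: "space (countable_mixture M w K) = space M"
  by (simp add: countable_mixture_def)

lemma emeasure_countable_mixture:
  assumes K: "\<And>i. sets (K i) = sets M" and A: "A \<in> sets M"
  shows "emeasure (countable_mixture M w K) A = (\<Sum>i. w i * emeasure (K i) A)"
  unfolding countable_mixture_def
proof (rule emeasure_measure_of_sigma[OF sets.sigma_algebra_axioms _ _ A])
  show "positive (sets M) (\<lambda>A. \<Sum>i. w i * emeasure (K i) A)"
    by (simp add: positive_def)
  show "countably_additive (sets M) (\<lambda>A. \<Sum>i. w i * emeasure (K i) A)"
  proof (rule countably_additiveI)
    fix B :: "nat \<Rightarrow> 'a set"
    assume B: "range B \<subseteq> sets M" "disjoint_family B"
    have "(\<Sum>j. \<Sum>i. w i * emeasure (K i) (B j)) = (\<Sum>i. \<Sum>j. w i * emeasure (K i) (B j))"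
      by (rule suminf_commute_ennreal)
    also have "\<dots> = (\<Sum>i. w i * emeasure (K i) (\<Union>j. B j))"
      using B K by (simp add: suminf_emeasure)
    finally show "(\<Sum>j. \<Sum>i. w i * emeasure (K i) (B j)) = (\<Sum>i. w i * emeasure (K i) (\<Union>j. B j))" .
  qed
qed

lemma countable_mixture_in_prob_algebra:
  assumes K: "\<And>i. K i \<in> space (prob_algebra M)" and w: "(\<Sum>i. w i) = 1"
  shows "countable_mixture M w K \<in> space (prob_algebra M)"
proof -
  have "emeasure (countable_mixture M w K) (space M) = (\<Sum>i. w i)"
    using K by (simp add: emeasure_countable_mixture space_prob_algebra in_space_prob_algebra)
  then show ?thesis
    using w by (auto simp: space_prob_algebra intro!: prob_spaceI)
qed

lemma sets_mix_measure [simp]: "sets (mix_measure M x e v) = sets M"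
  by (simp add: mix_measure_def)

lemma space_mix_measure [simp]: "space (mix_measure M x e v) = space M"
  by (simp add: mix_measure_def)

lemma emeasure_mix_measure:
  assumes "sets e = sets M" "sets v = sets M" and A: "A \<in> sets M"
  shows "emeasure (mix_measure M x e v) A = ennreal x * emeasure e A + ennreal (1 - x) * emeasure v A"
  unfolding mix_measure_def
proof (rule emeasure_measure_of_sigma[OF sets.sigma_algebra_axioms _ _ A])
  show "positive (sets M) (\<lambda>A. ennreal x * emeasure e A + ennreal (1 - x) * emeasure v A)"
    by (simp add: positive_def)
  show "countably_additive (sets M) (\<lambda>A. ennreal x * emeasure e A + ennreal (1 - x) * emeasure v A)"
  proof (rule countably_additiveI)
    fix B :: "nat \<Rightarrow> 'a set"
    assume "range B \<subseteq> sets M" "disjoint_family B"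
    then show "(\<Sum>j. ennreal x * emeasure e (B j) + ennreal (1 - x) * emeasure v (B j)) =
        ennreal x * emeasure e (\<Union>j. B j) + ennreal (1 - x) * emeasure v (\<Union>j. B j)"
      using assms by (simp add: suminf_add[symmetric] suminf_emeasure)
  qed
qed

lemma mix_measure_in_prob_algebra:
  assumes "e \<in> space (prob_algebra M)" "v \<in> space (prob_algebra M)" and x: "x \<in> {0..1}"
  shows "mix_measure M x e v \<in> space (prob_algebra M)"
proof -
  have "emeasure (mix_measure M x e v) (space M) = ennreal x + ennreal (1 - x)"
    using assms by (simp add: emeasure_mix_measure space_prob_algebra in_space_prob_algebra)
  also have "\<dots> = 1"
    using x by (simp flip: ennreal_plus)
  finally show ?thesis
    by (auto simp: space_prob_algebra intro!: prob_spaceI)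
qed

lemma measure_mix_measure:
  assumes "e \<in> space (prob_algebra M)" "v \<in> space (prob_algebra M)" and x: "x \<in> {0..1}"
    and A: "A \<in> sets M"
  shows "measure (mix_measure M x e v) A = x * measure e A + (1 - x) * measure v A"
proof -
  have "emeasure (mix_measure M x e v) A = ennreal (x * measure e A + (1 - x) * measure v A)"
    using assms
    by (simp add: emeasure_mix_measure space_prob_algebra prob_space.finite_measure
        finite_measure.emeasure_eq_measure flip: ennreal_mult ennreal_plus)
  then show ?thesis
    using x by (simp add: measure_def[of "mix_measure M x e v"] enn2real_plus)
qed

lemma measurable_prob_algebra_emeasureI:
  assumes "\<And>x. x \<in> space N \<Longrightarrow> K x \<in> space (prob_algebra M)"
    and "\<And>A. A \<in> sets M \<Longrightarrow> (\<lambda>x. emeasure (K x) A) \<in> borel_measurable N"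
  shows "K \<in> N \<rightarrow>\<^sub>M prob_algebra M"
proof (rule measurable_prob_algebra_generated[where \<Omega>="space M" and G="sets M"])
  show "sets M = sigma_sets (space M) (sets M)"
    by (simp add: sets.sigma_sets_eq)
  show "Int_stable (sets M)"
    by (auto simp: Int_stable_def)
qed (use assms in \<open>auto simp: space_prob_algebra sets.space_closed\<close>)

lemma measurable_emeasure_prob_algebra [measurable]:
  "A \<in> sets M \<Longrightarrow> (\<lambda>N. emeasure N A) \<in> borel_measurable (prob_algebra M)"
  unfolding prob_algebra_def by (intro measurable_restrict_space1 measurable_emeasure_subprob_algebra)

definition mixing_map :: "'a measure \<Rightarrow> ('a measure \<times> real) \<times> 'a measure \<Rightarrow> 'a measure" where
  "mixing_map M = (\<lambda>((e, x), v). mix_measure M x e v)"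

lemma mixing_map_Pair: "mixing_map M (q, v) = mix_measure M (snd q) (fst q) v"
  by (simp add: mixing_map_def split_beta)

lemma measurable_mixing_map [measurable]:
  "mixing_map M \<in> (prob_algebra M \<Otimes>\<^sub>M unit_interval) \<Otimes>\<^sub>M prob_algebra M \<rightarrow>\<^sub>M prob_algebra M"
proof (rule measurable_prob_algebra_emeasureI)
  fix z assume "z \<in> space ((prob_algebra M \<Otimes>\<^sub>M unit_interval) \<Otimes>\<^sub>M prob_algebra M)"
  then show "mixing_map M z \<in> space (prob_algebra M)"
    by (auto simp: mixing_map_def space_pair_measure space_restrict_space intro!: mix_measure_in_prob_algebra)
next
  fix A assume A: "A \<in> sets M"
  have "(\<lambda>z. ennreal (snd (fst z)) * emeasure (fst (fst z)) A + ennreal (1 - snd (fst z)) * emeasure (snd z) A)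
      \<in> borel_measurable ((prob_algebra M \<Otimes>\<^sub>M unit_interval) \<Otimes>\<^sub>M prob_algebra M)"
    using A by measurable
  then show "(\<lambda>z. emeasure (mixing_map M z) A)
      \<in> borel_measurable ((prob_algebra M \<Otimes>\<^sub>M unit_interval) \<Otimes>\<^sub>M prob_algebra M)"
    by (rule measurable_cong[THEN iffD1, rotated])
      (auto simp: mixing_map_def space_pair_measure space_prob_algebra A emeasure_mix_measure)
qed

section \<open>A generator of the \<sigma>-algebra on probability measures\<close>

text \<open>\<open>prob_box M 0 H\<close> is the finite intersection of the generating sets \<open>{\<chi>. \<chi>(A) < r}\<close>;
  the margin \<open>e > 0\<close> leaves room for the error term in the coupling argument.\<close>

definition prob_box :: "'a measure \<Rightarrow> real \<Rightarrow> ('a set \<times> real) set \<Rightarrow> 'a measure set" where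
  "prob_box M e H = {v \<in> space (prob_algebra M). \<forall>(A, r)\<in>H. measure v A + e < r}"

lemma prob_box_in_sets:
  assumes "finite H" "H \<subseteq> sets M \<times> UNIV"
  shows "prob_box M e H \<in> sets (prob_algebra M)"
  unfolding prob_box_def
proof (rule sets.sets_Collect_finite_All[OF _ assms(1)])
  fix p assume "p \<in> H"
  then have [measurable]: "fst p \<in> sets M"
    using assms(2) by auto
  have "{v \<in> space (prob_algebra M). measure v (fst p) + e < snd p} \<in> sets (prob_algebra M)"
    by measurable
  then show "{v \<in> space (prob_algebra M). case p of (A, r) \<Rightarrow> measure v A + e < r} \<in> sets (prob_algebra M)"
    by (simp add: split_beta)
qed

lemma prob_box_Un: "prob_box M e H1 \<inter> prob_box M e H2 = prob_box M e (H1 \<union> H2)"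
  unfolding prob_box_def by blast

lemma prob_box_antimono: "e' \<le> e \<Longrightarrow> prob_box M e H \<subseteq> prob_box M e' H"
  unfolding prob_box_def by fastforce

lemma prob_box_eq_Union:
  assumes "finite H"
  shows "prob_box M 0 H = (\<Union>n. prob_box M (1 / Suc n) H)"
proof (intro equalityI subsetI)
  fix v assume v: "v \<in> prob_box M 0 H"
  have "\<forall>(A, r)\<in>H. eventually (\<lambda>n. 1 / real (Suc n) < r - measure v A) sequentially"
    using v LIMSEQ_inverse_real_of_nat[THEN order_tendstoD(2)] by (auto simp: prob_box_def inverse_eq_divide)
  then have "eventually (\<lambda>n. \<forall>(A, r)\<in>H. 1 / real (Suc n) < r - measure v A) sequentially"
    using eventually_ball_finite[OF assms] by (simp add: case_prod_beta)
  then obtain n where "\<forall>(A, r)\<in>H. 1 / real (Suc n) < r - measure v A"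
    by (auto simp: eventually_sequentially)
  then have "v \<in> prob_box M (1 / Suc n) H"
    using v by (auto simp: prob_box_def)
  then show "v \<in> (\<Union>n. prob_box M (1 / Suc n) H)"
    by blast
next
  fix v assume "v \<in> (\<Union>n. prob_box M (1 / Suc n) H)"
  then obtain n where "v \<in> prob_box M (1 / Suc n) H"
    by blast
  then show "v \<in> prob_box M 0 H"
    using prob_box_antimono[of 0 "1 / Suc n" M H] by auto
qed

lemma incseq_prob_box: "incseq (\<lambda>n. prob_box M (1 / Suc n) H)"
  by (intro incseq_SucI prob_box_antimono) (simp add: frac_le)

definition prob_boxes :: "'a measure \<Rightarrow> 'a measure set set" where
  "prob_boxes M = {prob_box M 0 H | H. finite H \<and> H \<subseteq> sets M \<times> UNIV}"

lemma Int_stable_prob_boxes: "Int_stable (prob_boxes M)"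
proof (rule Int_stableI)
  fix a b assume "a \<in> prob_boxes M" "b \<in> prob_boxes M"
  then obtain H1 H2 where "a = prob_box M 0 H1" "b = prob_box M 0 H2"
    and "finite H1" "finite H2" "H1 \<subseteq> sets M \<times> UNIV" "H2 \<subseteq> sets M \<times> UNIV"
    by (auto simp: prob_boxes_def)
  then show "a \<inter> b \<in> prob_boxes M"
    unfolding prob_boxes_def by (auto simp: prob_box_Un intro!: exI[of _ "H1 \<union> H2"])
qed

lemma prob_boxes_subset_Pow: "prob_boxes M \<subseteq> Pow (space (prob_algebra M))"
  unfolding prob_boxes_def prob_box_def by blast

lemma space_in_prob_boxes: "space (prob_algebra M) \<in> prob_boxes M"
  unfolding prob_boxes_def by (intro CollectI exI[of _ "{}"]) (auto simp: prob_box_def)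

lemma sets_prob_algebra_eq_prob_boxes:
  "sets (prob_algebra M) = sigma_sets (space (prob_algebra M)) (prob_boxes M)"
proof
  show "sigma_sets (space (prob_algebra M)) (prob_boxes M) \<subseteq> sets (prob_algebra M)"
    by (rule sets.sigma_sets_subset) (auto simp: prob_boxes_def intro: prob_box_in_sets)
  let ?S = "sigma (space (prob_algebra M)) (prob_boxes M)"
  have sets_S: "sets ?S = sigma_sets (space (prob_algebra M)) (prob_boxes M)"
    by (rule sets_measure_of[OF prob_boxes_subset_Pow])
  have space_S: "space ?S = space (prob_algebra M)"
    by (rule space_measure_of[OF prob_boxes_subset_Pow])
  have ident: "(\<lambda>v. v) \<in> ?S \<rightarrow>\<^sub>M prob_algebra M"
  proof (rule measurable_prob_algebra_emeasureI)
    fix A assume A: "A \<in> sets M"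
    have "(\<lambda>v. measure v A) \<in> borel_measurable ?S"
    proof (rule borel_measurable_iff_less[THEN iffD2], rule allI)
      fix a
      have "{v \<in> space ?S. measure v A < a} = prob_box M 0 {(A, a)}"
        by (simp add: space_S prob_box_def)
      also have "\<dots> \<in> prob_boxes M"
        using A by (auto simp: prob_boxes_def)
      finally show "{v \<in> space ?S. measure v A < a} \<in> sets ?S"
        unfolding sets_S by (rule sigma_sets.Basic)
    qed
    then have "(\<lambda>v. ennreal (measure v A)) \<in> borel_measurable ?S"
      by measurable
    then show "(\<lambda>v. emeasure v A) \<in> borel_measurable ?S"
      by (rule measurable_cong[THEN iffD1, rotated])
        (unfold space_S, auto simp: space_prob_algebra prob_space.finite_measure finite_measure.emeasure_eq_measure)
  qed (simp add: space_S)
  show "sets (prob_algebra M) \<subseteq> sigma_sets (space (prob_algebra M)) (prob_boxes M)"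
  proof
    fix S assume S: "S \<in> sets (prob_algebra M)"
    have "(\<lambda>v. v) -` S \<inter> space ?S = S"
      using sets.sets_into_space[OF S] space_S by auto
    then show "S \<in> sigma_sets (space (prob_algebra M)) (prob_boxes M)"
      using measurable_sets[OF ident S] sets_S by simp
  qed
qed

section \<open>Stick-breaking random measures\<close>

lemma snth_streams_Times: "s \<in> streams (A \<times> B) \<Longrightarrow> fst (s !! j) \<in> A \<and> snd (s !! j) \<in> B"
  by (auto simp: streams_iff_snth mem_Times_iff)

definition stick_weight :: "('b \<times> real) stream \<Rightarrow> nat \<Rightarrow> real" where
  "stick_weight s i = snd (s !! i) * (\<Prod>j<i. 1 - snd (s !! j))"

definition stick_mass :: "('b \<times> real) stream \<Rightarrow> ennreal" where
  "stick_mass s = (\<Sum>i. ennreal (stick_weight s i))"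

lemma stick_weight_Stream_0 [simp]: "stick_weight (x ## s) 0 = snd x"
  by (simp add: stick_weight_def)

lemma stick_weight_Stream_Suc [simp]: "stick_weight (x ## s) (Suc i) = (1 - snd x) * stick_weight s i"
  unfolding stick_weight_def by (subst prod.lessThan_Suc_shift) simp

lemma stick_weight_nonneg: "(\<And>j. snd (s !! j) \<in> {0..1}) \<Longrightarrow> 0 \<le> stick_weight s i"
  unfolding stick_weight_def by (auto intro!: mult_nonneg_nonneg prod_nonneg)

lemma sum_stick_weight: "(\<Sum>i<n. stick_weight s i) = 1 - (\<Prod>j<n. 1 - snd (s !! j))"
  by (induction n) (auto simp: stick_weight_def algebra_simps)

lemma stick_mass_le_1:
  assumes s: "\<And>j. snd (s !! j) \<in> {0..1}"
  shows "stick_mass s \<le> 1"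
  unfolding stick_mass_def suminf_eq_SUP
proof (rule SUP_least)
  fix n
  have "(\<Sum>i<n. ennreal (stick_weight s i)) = ennreal (1 - (\<Prod>j<n. 1 - snd (s !! j)))"
    using stick_weight_nonneg[OF s] by (simp add: sum_ennreal sum_stick_weight)
  also have "\<dots> \<le> 1"
    using s by (auto simp: ennreal_le_1 intro!: prod_nonneg)
  finally show "(\<Sum>i<n. ennreal (stick_weight s i)) \<le> 1" .
qed

lemma stick_mass_Stream:
  assumes x: "snd x \<in> {0..1}" and s: "\<And>j. snd (s !! j) \<in> {0..1}"
  shows "stick_mass (x ## s) = ennreal (snd x) + ennreal (1 - snd x) * stick_mass s"
proof -
  have "stick_mass (x ## s) = ennreal (snd x) + (\<Sum>i. ennreal ((1 - snd x) * stick_weight s i))"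
    unfolding stick_mass_def by (subst suminf_ennreal_split_head) simp
  also have "\<dots> = ennreal (snd x) + ennreal (1 - snd x) * stick_mass s"
    using x stick_weight_nonneg[OF s] by (simp add: stick_mass_def ennreal_mult)
  finally show ?thesis .
qed

text \<open>The mass left over by the sticks goes to an arbitrary fixed measure \<open>e0\<close>: it is almost
  surely zero in the situation of the theorem, and since \<open>e0\<close> does not depend on the stream,
  the recursion \<open>stick_breaking_measure_Stream\<close> still holds.\<close>

definition stick_breaking_measure :: "'a measure \<Rightarrow> 'a measure \<Rightarrow> ('a measure \<times> real) stream \<Rightarrow> 'a measure" where
  "stick_breaking_measure M e0 s = countable_mixture M
     (case_nat (1 - stick_mass s) (\<lambda>i. ennreal (stick_weight s i)))
     (case_nat e0 (\<lambda>i. fst (s !! i)))"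

context
  fixes M :: "'a measure" and e0 :: "'a measure"
  assumes e0: "e0 \<in> space (prob_algebra M)"
begin

lemma emeasure_stick_breaking_measure:
  assumes s: "s \<in> streams (space (prob_algebra M) \<times> {0..1})" and A: "A \<in> sets M"
  shows "emeasure (stick_breaking_measure M e0 s) A =
    (1 - stick_mass s) * emeasure e0 A + (\<Sum>i. ennreal (stick_weight s i) * emeasure (fst (s !! i)) A)"
proof -
  have "sets (case_nat e0 (\<lambda>i. fst (s !! i)) i) = sets M" for i
    using e0 snth_streams_Times[OF s] by (cases i) (auto simp: space_prob_algebra)
  then have "emeasure (stick_breaking_measure M e0 s) A =
      (\<Sum>i. case_nat (1 - stick_mass s) (\<lambda>i. ennreal (stick_weight s i)) i *
        emeasure (case_nat e0 (\<lambda>i. fst (s !! i)) i) A)"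
    unfolding stick_breaking_measure_def by (rule emeasure_countable_mixture[OF _ A])
  then show ?thesis
    by (subst (asm) suminf_ennreal_split_head) simp
qed

lemma stick_breaking_measure_in_prob_algebra:
  assumes s: "s \<in> streams (space (prob_algebra M) \<times> {0..1})"
  shows "stick_breaking_measure M e0 s \<in> space (prob_algebra M)"
  unfolding stick_breaking_measure_def
proof (rule countable_mixture_in_prob_algebra)
  show "case_nat e0 (\<lambda>i. fst (s !! i)) i \<in> space (prob_algebra M)" for i
    using e0 snth_streams_Times[OF s] by (cases i) auto
  have "stick_mass s \<le> 1"
    using stick_mass_le_1 snth_streams_Times[OF s] by blast
  then show "(\<Sum>i. case_nat (1 - stick_mass s) (\<lambda>i. ennreal (stick_weight s i)) i) = 1"
    by (subst suminf_ennreal_split_head) (simp add: stick_mass_def[symmetric] diff_add_cancel_ennreal)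
qed

lemma stick_breaking_measure_Stream:
  assumes x: "x \<in> space (prob_algebra M) \<times> {0..1}" and s: "s \<in> streams (space (prob_algebra M) \<times> {0..1})"
  shows "stick_breaking_measure M e0 (x ## s) = mix_measure M (snd x) (fst x) (stick_breaking_measure M e0 s)"
proof (rule measure_eqI)
  fix A assume "A \<in> sets (stick_breaking_measure M e0 (x ## s))"
  then have A: "A \<in> sets M"
    by (simp add: stick_breaking_measure_def)
  have xs: "x ## s \<in> streams (space (prob_algebra M) \<times> {0..1})"
    using x s by simp
  have x01: "snd x \<in> {0..1}" and s01: "\<And>j. snd (s !! j) \<in> {0..1}"
    using x snth_streams_Times[OF s] by auto
  have rest: "1 - stick_mass (x ## s) = ennreal (1 - snd x) * (1 - stick_mass s)"
    using stick_mass_Stream[OF x01 s01] ennreal_one_minus_convex_combination[OF x01 stick_mass_le_1[OF s01]]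
    by simp
  have "emeasure (stick_breaking_measure M e0 (x ## s)) A =
      ennreal (snd x) * emeasure (fst x) A + ennreal (1 - snd x) *
        ((1 - stick_mass s) * emeasure e0 A + (\<Sum>i. ennreal (stick_weight s i) * emeasure (fst (s !! i)) A))"
    unfolding emeasure_stick_breaking_measure[OF xs A] rest
    using x01 stick_weight_nonneg[OF s01]
    by (subst suminf_ennreal_split_head) (simp add: ennreal_mult distrib_left mult.assoc add_ac)
  also have "\<dots> = emeasure (mix_measure M (snd x) (fst x) (stick_breaking_measure M e0 s)) A"
    using x A stick_breaking_measure_in_prob_algebra[OF s]
    by (auto simp: emeasure_stick_breaking_measure[OF s A] emeasure_mix_measure space_prob_algebra)
  finally show "emeasure (stick_breaking_measure M e0 (x ## s)) A =
      emeasure (mix_measure M (snd x) (fst x) (stick_breaking_measure M e0 s)) A" .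
qed (simp add: stick_breaking_measure_def)

lemma measurable_stick_breaking_measure:
  assumes N: "sets N = sets (prob_algebra M \<Otimes>\<^sub>M unit_interval)"
  shows "stick_breaking_measure M e0 \<in> stream_space N \<rightarrow>\<^sub>M prob_algebra M"
proof (rule measurable_prob_algebra_emeasureI)
  have space_N: "space N = space (prob_algebra M) \<times> {0..1}"
    using sets_eq_imp_space_eq[OF N] by (simp add: space_prob_algebra_unit_interval)
  show "stick_breaking_measure M e0 s \<in> space (prob_algebra M)" if "s \<in> space (stream_space N)" for s
    using that by (intro stick_breaking_measure_in_prob_algebra) (simp add: space_stream_space space_N)
  have [measurable]: "(\<lambda>s. s !! i) \<in> stream_space N \<rightarrow>\<^sub>M prob_algebra M \<Otimes>\<^sub>M unit_interval" for i
    using measurable_snth[of i N] N by (simp cong: measurable_cong_sets)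
  fix A assume [measurable]: "A \<in> sets M"
  have "(\<lambda>s. (1 - stick_mass s) * emeasure e0 A + (\<Sum>i. ennreal (stick_weight s i) * emeasure (fst (s !! i)) A))
      \<in> borel_measurable (stream_space N)"
    unfolding stick_mass_def stick_weight_def by measurable
  then show "(\<lambda>s. emeasure (stick_breaking_measure M e0 s) A) \<in> borel_measurable (stream_space N)"
    by (rule measurable_cong[THEN iffD1, rotated])
      (simp add: emeasure_stick_breaking_measure space_stream_space space_N)
qed

end

section \<open>Couplings and discrepancy\<close>

definition coupling :: "'b measure \<Rightarrow> 'b measure \<Rightarrow> 'b measure \<Rightarrow> ('b \<times> 'b) measure \<Rightarrow> bool" where
  "coupling N L1 L2 J \<longleftrightarrow> prob_space J \<and> sets J = sets (N \<Otimes>\<^sub>M N) \<and> distr J N fst = L1 \<and> distr J N snd = L2"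

lemma space_coupling: "coupling N L1 L2 J \<Longrightarrow> space J = space (N \<Otimes>\<^sub>M N)"
  unfolding coupling_def by (metis sets_eq_imp_space_eq)

lemma distr_pair_snd:
  assumes "prob_space L1" "prob_space L2"
  shows "distr (L1 \<Otimes>\<^sub>M L2) L2 snd = L2"
proof (rule measure_eqI)
  fix A assume A: "A \<in> sets (distr (L1 \<Otimes>\<^sub>M L2) L2 snd)"
  then have "emeasure (distr (L1 \<Otimes>\<^sub>M L2) L2 snd) A = emeasure (L1 \<Otimes>\<^sub>M L2) (space L1 \<times> A)"
    by (auto simp: emeasure_distr space_pair_measure dest: sets.sets_into_space
        intro!: arg_cong2[where f=emeasure])
  with A show "emeasure (distr (L1 \<Otimes>\<^sub>M L2) L2 snd) A = emeasure L2 A"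
    using assms by (simp add: prob_space.emeasure_space_1 prob_space_imp_sigma_finite
        sigma_finite_measure.emeasure_pair_measure_Times)
qed simp

lemma coupling_pair_measure:
  assumes L: "prob_space L1" "prob_space L2" "sets L1 = sets N" "sets L2 = sets N"
  shows "coupling N L1 L2 (L1 \<Otimes>\<^sub>M L2)"
proof -
  have "distr (L1 \<Otimes>\<^sub>M L2) N fst = distr (L1 \<Otimes>\<^sub>M L2) L1 fst"
    using L by (intro distr_cong) auto
  also have "\<dots> = L1"
    using L by (simp add: prob_space.distr_pair_fst)
  finally have "distr (L1 \<Otimes>\<^sub>M L2) N fst = L1" .
  moreover have "distr (L1 \<Otimes>\<^sub>M L2) N snd = L2"
    using L distr_pair_snd[OF L(1,2)] by (metis (no_types) distr_cong sets_pair_measure_cong refl)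
  ultimately show ?thesis
    using L prob_space_pair[OF L(1,2)] by (simp add: coupling_def cong: sets_pair_measure_cong)
qed

definition discrepancy :: "'a set set \<Rightarrow> 'a measure \<times> 'a measure \<Rightarrow> real" where
  "discrepancy H w = (\<Sum>A\<in>H. \<bar>measure (fst w) A - measure (snd w) A\<bar>)"

lemma discrepancy_nonneg: "0 \<le> discrepancy H w"
  unfolding discrepancy_def by (auto intro: sum_nonneg)

lemma measurable_discrepancy [measurable]:
  assumes "H \<subseteq> sets M"
  shows "discrepancy H \<in> borel_measurable (prob_algebra M \<Otimes>\<^sub>M prob_algebra M)"
  unfolding discrepancy_def
proof (rule borel_measurable_sum)
  fix A assume "A \<in> H"
  then have [measurable]: "A \<in> sets M"
    using assms by auto
  show "(\<lambda>w. \<bar>measure (fst w) A - measure (snd w) A\<bar>) \<in> borel_measurable (prob_algebra M \<Otimes>\<^sub>M prob_algebra M)"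
    by measurable
qed

lemma discrepancy_le_card:
  assumes "w \<in> space (prob_algebra M \<Otimes>\<^sub>M prob_algebra M)"
  shows "discrepancy H w \<le> card H"
proof -
  have "prob_space (fst w)" "prob_space (snd w)"
    using assms by (auto simp: space_pair_measure space_prob_algebra)
  then have "\<bar>measure (fst w) A - measure (snd w) A\<bar> \<le> 1" for A
    by (smt (verit) measure_nonneg prob_space.prob_le_1)
  then show ?thesis
    unfolding discrepancy_def
    using sum_bounded_above[of H "\<lambda>A. \<bar>measure (fst w) A - measure (snd w) A\<bar>" 1] by simp
qed

lemma discrepancy_mix_measure:
  assumes "e \<in> space (prob_algebra M)" "v1 \<in> space (prob_algebra M)" "v2 \<in> space (prob_algebra M)"
    and x: "x \<in> {0..1}" and H: "H \<subseteq> sets M"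
  shows "discrepancy H (mix_measure M x e v1, mix_measure M x e v2) = (1 - x) * discrepancy H (v1, v2)"
proof -
  have "measure (mix_measure M x e v1) A - measure (mix_measure M x e v2) A =
      (1 - x) * (measure v1 A - measure v2 A)" if "A \<in> H" for A
    using assms that by (auto simp: measure_mix_measure algebra_simps)
  then have "\<bar>measure (mix_measure M x e v1) A - measure (mix_measure M x e v2) A\<bar> =
      (1 - x) * \<bar>measure v1 A - measure v2 A\<bar>" if "A \<in> H" for A
    using x that by (simp add: abs_mult)
  then show ?thesis
    by (simp add: discrepancy_def sum_distrib_left)
qed

lemma emeasure_prob_box_le_coupling:
  assumes J: "coupling (prob_algebra M) L1 L2 J" and H: "finite H" "H \<subseteq> sets M \<times> UNIV" and e: "0 < e"
  shows "emeasure L1 (prob_box M e H) \<le>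
    emeasure L2 (prob_box M 0 H) + ennreal (1 / e) * (\<integral>\<^sup>+w. discrepancy (fst ` H) w \<partial>J)"
proof -
  have sets_J: "sets J = sets (prob_algebra M \<Otimes>\<^sub>M prob_algebra M)"
    using J by (simp add: coupling_def)
  have space_J: "space J = space (prob_algebra M \<Otimes>\<^sub>M prob_algebra M)"
    using J by (rule space_coupling)
  have "fst ` H \<subseteq> sets M"
    using H by auto
  then have [measurable]: "fst \<in> J \<rightarrow>\<^sub>M prob_algebra M" "snd \<in> J \<rightarrow>\<^sub>M prob_algebra M"
    "discrepancy (fst ` H) \<in> borel_measurable J"
    using sets_J by (auto simp: measurable_discrepancy cong: measurable_cong_sets)
  have [measurable]: "prob_box M e H \<in> sets (prob_algebra M)" for e
    using H by (rule prob_box_in_sets)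
  let ?far = "{w \<in> space J. 1 \<le> ennreal (1 / e) * ennreal (discrepancy (fst ` H) w)}"
  have "fst -` prob_box M e H \<inter> space J \<subseteq> (snd -` prob_box M 0 H \<inter> space J) \<union> ?far"
  proof
    fix w assume w: "w \<in> fst -` prob_box M e H \<inter> space J"
    show "w \<in> (snd -` prob_box M 0 H \<inter> space J) \<union> ?far"
    proof (cases "w \<in> ?far")
      case False
      then have small: "discrepancy (fst ` H) w < e"
        using w e by (auto simp: ennreal_mult[symmetric] discrepancy_nonneg ennreal_1[symmetric] simp del: ennreal_1)
      have "measure (snd w) A < r" if "(A, r) \<in> H" for A r
      proof -
        have "\<bar>measure (fst w) A - measure (snd w) A\<bar> \<le> discrepancy (fst ` H) w"
          unfolding discrepancy_def using H(1) that by (intro member_le_sum) force+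
        then show ?thesis
          using w small that by (auto simp: prob_box_def)
      qed
      then have "snd w \<in> prob_box M 0 H"
        using w space_J by (auto simp: prob_box_def space_pair_measure)
      then show ?thesis
        using w by blast
    qed simp
  qed
  moreover have L1: "L1 = distr J (prob_algebra M) fst" and L2: "L2 = distr J (prob_algebra M) snd"
    using J by (simp_all add: coupling_def)
  ultimately have "emeasure L1 (prob_box M e H) \<le> emeasure J ((snd -` prob_box M 0 H \<inter> space J) \<union> ?far)"
    by (simp add: emeasure_distr emeasure_mono)
  also have "\<dots> \<le> emeasure J (snd -` prob_box M 0 H \<inter> space J) + emeasure J ?far"
    by (rule emeasure_subadditive) measurable
  also have "emeasure J (snd -` prob_box M 0 H \<inter> space J) = emeasure L2 (prob_box M 0 H)"
    unfolding L2 by (rule emeasure_distr[symmetric]) measurable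
  also have "emeasure J ?far \<le> ennreal (1 / e) * (\<integral>\<^sup>+w. ennreal (discrepancy (fst ` H) w) * indicator (space J) w \<partial>J)"
    by (rule nn_integral_Markov_inequality) auto
  also have "(\<integral>\<^sup>+w. ennreal (discrepancy (fst ` H) w) * indicator (space J) w \<partial>J) = (\<integral>\<^sup>+w. discrepancy (fst ` H) w \<partial>J)"
    by (rule nn_integral_cong) simp
  finally show ?thesis
    by (simp add: add_left_mono)
qed

section \<open>The distributional fixed-point equation\<close>

locale random_mixture =
  fixes M :: "'a measure" and Q :: "('a measure \<times> real) measure"
  assumes prob_space_Q: "prob_space Q"
    and sets_Q: "sets Q = sets (prob_algebra M \<Otimes>\<^sub>M unit_interval)"
begin

lemma space_Q: "space Q = space (prob_algebra M) \<times> {0..1}"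
  using sets_eq_imp_space_eq[OF sets_Q] by (simp add: space_prob_algebra_unit_interval)

lemma measurable_mixing_map_Q [measurable]:
  "sets N = sets (prob_algebra M) \<Longrightarrow> mixing_map M \<in> Q \<Otimes>\<^sub>M N \<rightarrow>\<^sub>M prob_algebra M"
  using measurable_mixing_map by (simp add: sets_Q cong: measurable_cong_sets sets_pair_measure_cong)

definition stationary :: "'a measure measure \<Rightarrow> bool" where
  "stationary L \<longleftrightarrow> prob_space L \<and> sets L = sets (prob_algebra M) \<and>
     L = distr (Q \<Otimes>\<^sub>M L) (prob_algebra M) (mixing_map M)"

definition base_measure :: "'a measure" where
  "base_measure = fst (SOME q. q \<in> space Q)"

lemma base_measure_in_prob_algebra: "base_measure \<in> space (prob_algebra M)"
proof -
  have "(SOME q. q \<in> space Q) \<in> space Q"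
    using prob_space.not_empty[OF prob_space_Q] by (simp add: some_in_eq)
  then show ?thesis
    by (auto simp: base_measure_def space_Q)
qed

definition stick_breaking_law :: "'a measure measure" where
  "stick_breaking_law = distr (stream_space Q) (prob_algebra M) (stick_breaking_measure M base_measure)"

lemma stationary_stick_breaking_law: "stationary stick_breaking_law"
proof -
  interpret Q: prob_space Q
    by (rule prob_space_Q)
  let ?stick = "stick_breaking_measure M base_measure"
  let ?L = stick_breaking_law
  have [measurable]: "?stick \<in> stream_space Q \<rightarrow>\<^sub>M prob_algebra M"
    using measurable_stick_breaking_measure[OF base_measure_in_prob_algebra sets_Q] .
  have prob_L: "prob_space ?L" and sets_L [measurable_cong]: "sets ?L = sets (prob_algebra M)"
    unfolding stick_breaking_law_def by (auto intro!: prob_space.prob_space_distr Q.prob_space_stream_space)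
  interpret L: prob_space ?L
    by (rule prob_L)
  have "?L = distr (Q \<Otimes>\<^sub>M ?L) (prob_algebra M) (mixing_map M)"
  proof (rule measure_eqI)
    fix B assume "B \<in> sets ?L"
    then have [measurable]: "B \<in> sets (prob_algebra M)"
      by (simp add: sets_L)
    have "emeasure ?L B = (\<integral>\<^sup>+s. indicator B (?stick s) \<partial>stream_space Q)"
      unfolding stick_breaking_law_def by (rule emeasure_distr_eq_nn_integral) measurable
    also have "\<dots> = (\<integral>\<^sup>+q. \<integral>\<^sup>+s. indicator B (?stick (q ## s)) \<partial>stream_space Q \<partial>Q)"
      by (rule Q.nn_integral_stream_space) measurable
    also have "\<dots> = (\<integral>\<^sup>+q. \<integral>\<^sup>+s. indicator B (mixing_map M (q, ?stick s)) \<partial>stream_space Q \<partial>Q)"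
      using base_measure_in_prob_algebra by (intro nn_integral_cong)
        (simp add: mixing_map_Pair stick_breaking_measure_Stream space_Q space_stream_space
          flip: space_prob_algebra_unit_interval)
    also have "\<dots> = (\<integral>\<^sup>+q. \<integral>\<^sup>+v. indicator B (mixing_map M (q, v)) \<partial>?L \<partial>Q)"
    proof (intro nn_integral_cong)
      fix q assume "q \<in> space Q"
      then have [measurable]: "(\<lambda>v. mixing_map M (q, v)) \<in> prob_algebra M \<rightarrow>\<^sub>M prob_algebra M"
        by (auto simp: sets_Q cong: measurable_cong_sets)
      show "(\<integral>\<^sup>+s. indicator B (mixing_map M (q, ?stick s)) \<partial>stream_space Q) =
          (\<integral>\<^sup>+v. indicator B (mixing_map M (q, v)) \<partial>?L)"
        unfolding stick_breaking_law_def by (simp add: nn_integral_distr)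
    qed
    also have "\<dots> = (\<integral>\<^sup>+z. indicator B (mixing_map M z) \<partial>(Q \<Otimes>\<^sub>M ?L))"
      by (rule L.nn_integral_fst) measurable
    also have "\<dots> = emeasure (distr (Q \<Otimes>\<^sub>M ?L) (prob_algebra M) (mixing_map M)) B"
      by (rule emeasure_distr_eq_nn_integral[symmetric]) measurable
    finally show "emeasure ?L B = emeasure (distr (Q \<Otimes>\<^sub>M ?L) (prob_algebra M) (mixing_map M)) B" .
  qed (simp add: sets_L)
  then show ?thesis
    using prob_L sets_L by (simp add: stationary_def)
qed

definition coupled_step :: "('a measure \<times> 'a measure) measure \<Rightarrow> ('a measure \<times> 'a measure) measure" where
  "coupled_step J = distr (Q \<Otimes>\<^sub>M J) (prob_algebra M \<Otimes>\<^sub>M prob_algebra M)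
     (\<lambda>(q, v1, v2). (mixing_map M (q, v1), mixing_map M (q, v2)))"

lemma distr_mixing_map_marginal:
  assumes J: "prob_space J" "sets J = sets (prob_algebra M \<Otimes>\<^sub>M prob_algebra M)"
    and p: "p \<in> prob_algebra M \<Otimes>\<^sub>M prob_algebra M \<rightarrow>\<^sub>M prob_algebra M"
  shows "distr (Q \<Otimes>\<^sub>M J) (prob_algebra M) (\<lambda>(q, w). mixing_map M (q, p w)) =
    distr (Q \<Otimes>\<^sub>M distr J (prob_algebra M) p) (prob_algebra M) (mixing_map M)"
proof -
  have [measurable]: "p \<in> J \<rightarrow>\<^sub>M prob_algebra M"
    using p J by (simp cong: measurable_cong_sets)
  have "Q \<Otimes>\<^sub>M distr J (prob_algebra M) p = distr (Q \<Otimes>\<^sub>M J) (Q \<Otimes>\<^sub>M prob_algebra M) (\<lambda>(q, w). (q, p w))"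
    using pair_measure_distr[of "\<lambda>q. q" Q Q p J "prob_algebra M"] J
    by (simp add: prob_space_imp_sigma_finite prob_space.prob_space_distr distr_id2)
  then show ?thesis
    by (simp add: distr_distr comp_def split_beta')
qed

lemma coupling_coupled_step:
  assumes J: "coupling (prob_algebra M) L1 L2 J" and L: "stationary L1" "stationary L2"
  shows "coupling (prob_algebra M) L1 L2 (coupled_step J)"
proof -
  have prob_J: "prob_space J" and sets_J [measurable_cong]: "sets J = sets (prob_algebra M \<Otimes>\<^sub>M prob_algebra M)"
    using J by (auto simp: coupling_def)
  have "distr (coupled_step J) (prob_algebra M) fst = distr (Q \<Otimes>\<^sub>M L1) (prob_algebra M) (mixing_map M)"
    using J distr_mixing_map_marginal[OF prob_J sets_J measurable_fst]
    by (simp add: coupled_step_def distr_distr coupling_def comp_def split_beta')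
  moreover have "distr (coupled_step J) (prob_algebra M) snd = distr (Q \<Otimes>\<^sub>M L2) (prob_algebra M) (mixing_map M)"
    using J distr_mixing_map_marginal[OF prob_J sets_J measurable_snd]
    by (simp add: coupled_step_def distr_distr coupling_def comp_def split_beta')
  moreover have "prob_space (coupled_step J)"
    unfolding coupled_step_def
    by (auto intro!: prob_space.prob_space_distr prob_space_pair prob_space_Q prob_J)
  ultimately show ?thesis
    using L by (simp add: coupling_def coupled_step_def stationary_def)
qed

definition contraction_factor :: ennreal where
  "contraction_factor = (\<integral>\<^sup>+q. ennreal (1 - snd q) \<partial>Q)"

lemma nn_integral_discrepancy_coupled_step:
  assumes J: "prob_space J" "sets J = sets (prob_algebra M \<Otimes>\<^sub>M prob_algebra M)" and H: "H \<subseteq> sets M"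
  shows "(\<integral>\<^sup>+w. discrepancy H w \<partial>coupled_step J) = contraction_factor * (\<integral>\<^sup>+w. discrepancy H w \<partial>J)"
proof -
  interpret J: prob_space J
    by (rule J(1))
  have [measurable_cong]: "sets J = sets (prob_algebra M \<Otimes>\<^sub>M prob_algebra M)"
    by (rule J(2))
  have [measurable]: "discrepancy H \<in> borel_measurable (prob_algebra M \<Otimes>\<^sub>M prob_algebra M)"
    using H by (rule measurable_discrepancy)
  have [measurable]: "snd \<in> Q \<rightarrow>\<^sub>M borel"
    by (simp add: sets_Q cong: measurable_cong_sets)
  have "(\<integral>\<^sup>+w. discrepancy H w \<partial>coupled_step J) =
      (\<integral>\<^sup>+(q, v1, v2). discrepancy H (mixing_map M (q, v1), mixing_map M (q, v2)) \<partial>(Q \<Otimes>\<^sub>M J))"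
    unfolding coupled_step_def by (simp add: nn_integral_distr split_beta')
  also have "\<dots> = (\<integral>\<^sup>+(q, w). ennreal (1 - snd q) * discrepancy H w \<partial>(Q \<Otimes>\<^sub>M J))"
    using H sets_eq_imp_space_eq[OF J(2)]
    by (intro nn_integral_cong)
      (auto simp: space_pair_measure space_Q mixing_map_Pair discrepancy_mix_measure ennreal_mult discrepancy_nonneg)
  also have "\<dots> = (\<integral>\<^sup>+q. ennreal (1 - snd q) * (\<integral>\<^sup>+w. discrepancy H w \<partial>J) \<partial>Q)"
    by (subst J.nn_integral_fst[symmetric]) (auto simp: split_beta' nn_integral_cmult)
  also have "\<dots> = contraction_factor * (\<integral>\<^sup>+w. discrepancy H w \<partial>J)"
    unfolding contraction_factor_def by (rule nn_integral_multc) measurable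
  finally show ?thesis .
qed

lemma ex_coupling_small_discrepancy:
  assumes L: "stationary L1" "stationary L2" and H: "H \<subseteq> sets M"
  shows "\<exists>J. coupling (prob_algebra M) L1 L2 J \<and>
    (\<integral>\<^sup>+w. discrepancy H w \<partial>J) \<le> contraction_factor ^ n * of_nat (card H)"
proof (induction n)
  case 0
  have J: "coupling (prob_algebra M) L1 L2 (L1 \<Otimes>\<^sub>M L2)"
    using L by (intro coupling_pair_measure) (auto simp: stationary_def)
  then have "(\<integral>\<^sup>+w. discrepancy H w \<partial>(L1 \<Otimes>\<^sub>M L2)) \<le> (\<integral>\<^sup>+w. of_nat (card H) \<partial>(L1 \<Otimes>\<^sub>M L2))"
    by (intro nn_integral_mono) (simp add: space_coupling discrepancy_le_card ennreal_of_nat_eq_real_of_nat)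
  then show ?case
    using J by (auto simp: coupling_def prob_space.emeasure_space_1)
next
  case (Suc n)
  then obtain J where J: "coupling (prob_algebra M) L1 L2 J"
    and small: "(\<integral>\<^sup>+w. discrepancy H w \<partial>J) \<le> contraction_factor ^ n * of_nat (card H)"
    by blast
  have "(\<integral>\<^sup>+w. discrepancy H w \<partial>coupled_step J) = contraction_factor * (\<integral>\<^sup>+w. discrepancy H w \<partial>J)"
    using J H by (intro nn_integral_discrepancy_coupled_step) (auto simp: coupling_def)
  also have "\<dots> \<le> contraction_factor ^ Suc n * of_nat (card H)"
    using small by (simp add: mult_left_mono mult.assoc)
  finally show ?case
    using coupling_coupled_step[OF J L] by blast
qed

lemma measure_prob_box_margin_le:
  assumes c: "contraction_factor < 1" and L: "stationary L1" "stationary L2"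
    and H: "finite H" "H \<subseteq> sets M \<times> UNIV" and e: "0 < e"
  shows "measure L1 (prob_box M e H) \<le> measure L2 (prob_box M 0 H)"
proof -
  obtain c where c: "contraction_factor = ennreal c" "0 \<le> c" "c < 1"
    using c by (cases contraction_factor) (auto simp: top_unique)
  interpret L1: prob_space L1
    using L(1) by (simp add: stationary_def)
  interpret L2: prob_space L2
    using L(2) by (simp add: stationary_def)
  have Hs: "fst ` H \<subseteq> sets M"
    using H by auto
  let ?k = "real (card (fst ` H)) / e"
  have "measure L1 (prob_box M e H) \<le> measure L2 (prob_box M 0 H) + ?k * c ^ n" for n
  proof -
    obtain J where J: "coupling (prob_algebra M) L1 L2 J"
      and small: "(\<integral>\<^sup>+w. discrepancy (fst ` H) w \<partial>J) \<le> ennreal (c ^ n * card (fst ` H))"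
      using ex_coupling_small_discrepancy[OF L Hs, of n] c
      by (auto simp: ennreal_power ennreal_mult ennreal_of_nat_eq_real_of_nat)
    have "ennreal (measure L1 (prob_box M e H)) \<le>
        ennreal (measure L2 (prob_box M 0 H)) + ennreal (1 / e) * (\<integral>\<^sup>+w. discrepancy (fst ` H) w \<partial>J)"
      using emeasure_prob_box_le_coupling[OF J H e] by (simp add: L1.emeasure_eq_measure L2.emeasure_eq_measure)
    also have "\<dots> \<le> ennreal (measure L2 (prob_box M 0 H)) + ennreal (1 / e) * ennreal (c ^ n * card (fst ` H))"
      using small by (intro add_left_mono mult_left_mono) auto
    also have "\<dots> = ennreal (measure L2 (prob_box M 0 H) + ?k * c ^ n)"
      using e c by (simp add: ennreal_mult[symmetric] flip: ennreal_plus)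
    finally show ?thesis
      using e c by (subst (asm) ennreal_le_iff) auto
  qed
  moreover have "(\<lambda>n. measure L2 (prob_box M 0 H) + ?k * c ^ n) \<longlonglongrightarrow> measure L2 (prob_box M 0 H) + ?k * 0"
    using c by (intro tendsto_intros LIMSEQ_power_zero) auto
  ultimately show ?thesis
    by (intro LIMSEQ_le_const[where a="measure L1 (prob_box M e H)"]) auto
qed

lemma measure_prob_box_le:
  assumes c: "contraction_factor < 1" and L: "stationary L1" "stationary L2"
    and H: "finite H" "H \<subseteq> sets M \<times> UNIV"
  shows "measure L1 (prob_box M 0 H) \<le> measure L2 (prob_box M 0 H)"
proof -
  interpret L1: prob_space L1
    using L(1) by (simp add: stationary_def)
  have "(\<lambda>n. measure L1 (prob_box M (1 / Suc n) H)) \<longlonglongrightarrow> measure L1 (\<Union>n. prob_box M (1 / Suc n) H)"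
    using L(1) prob_box_in_sets[OF H]
    by (intro L1.finite_Lim_measure_incseq incseq_prob_box) (auto simp: stationary_def)
  then have "(\<lambda>n. measure L1 (prob_box M (1 / Suc n) H)) \<longlonglongrightarrow> measure L1 (prob_box M 0 H)"
    by (simp add: prob_box_eq_Union[OF H(1)])
  then show ?thesis
    using measure_prob_box_margin_le[OF c L H] by (intro LIMSEQ_le_const2) auto
qed

lemma stationary_unique:
  assumes c: "contraction_factor < 1" and L: "stationary L1" "stationary L2"
  shows "L1 = L2"
proof (rule measure_eqI_generator_eq[OF Int_stable_prob_boxes prob_boxes_subset_Pow])
  show "sets L1 = sigma_sets (space (prob_algebra M)) (prob_boxes M)"
    "sets L2 = sigma_sets (space (prob_algebra M)) (prob_boxes M)"
    using L by (simp_all add: stationary_def sets_prob_algebra_eq_prob_boxes)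
  fix B assume "B \<in> prob_boxes M"
  then obtain H where H: "finite H" "H \<subseteq> sets M \<times> UNIV" and B: "B = prob_box M 0 H"
    by (auto simp: prob_boxes_def)
  have "measure L1 B = measure L2 B"
    unfolding B using measure_prob_box_le[OF c L H] measure_prob_box_le[OF c L(2,1) H] by linarith
  then show "emeasure L1 B = emeasure L2 B"
    using L by (simp add: stationary_def prob_space.finite_measure finite_measure.emeasure_eq_measure)
next
  show "range (\<lambda>i. space (prob_algebra M)) \<subseteq> prob_boxes M" "(\<Union>i. space (prob_algebra M)) = space (prob_algebra M)"
    using space_in_prob_boxes by auto
  show "emeasure L1 (space (prob_algebra M)) \<noteq> \<infinity>"
    using L(1) by (simp add: stationary_def prob_space.finite_measure finite_measure.emeasure_eq_measure)
qed

end

lemma nn_integral_one_minus_less_1: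
  assumes P: "prob_space P" and X: "X \<in> P \<rightarrow>\<^sub>M unit_interval"
    and X0: "measure P {\<omega> \<in> space P. X \<omega> = 0} < 1"
  shows "(\<integral>\<^sup>+\<omega>. ennreal (1 - X \<omega>) \<partial>P) < 1"
proof -
  interpret P: prob_space P
    by (rule P)
  have [measurable]: "X \<in> borel_measurable P"
    using X by (simp add: measurable_restrict_space2_iff)
  have X01: "X \<omega> \<in> {0..1}" if "\<omega> \<in> space P" for \<omega>
    using measurable_space[OF X that] by (simp add: space_restrict_space)
  have "(\<integral>\<^sup>+\<omega>. ennreal (1 - X \<omega>) \<partial>P) + (\<integral>\<^sup>+\<omega>. ennreal (X \<omega>) \<partial>P) =
      (\<integral>\<^sup>+\<omega>. ennreal (1 - X \<omega>) + ennreal (X \<omega>) \<partial>P)"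
    by (rule nn_integral_add[symmetric]) auto
  also have "\<dots> = (\<integral>\<^sup>+\<omega>. 1 \<partial>P)"
    using X01 by (intro nn_integral_cong) (simp flip: ennreal_plus)
  finally have sum: "(\<integral>\<^sup>+\<omega>. ennreal (1 - X \<omega>) \<partial>P) + (\<integral>\<^sup>+\<omega>. ennreal (X \<omega>) \<partial>P) = 1"
    by (simp add: P.emeasure_space_1)
  have "(\<integral>\<^sup>+\<omega>. ennreal (X \<omega>) \<partial>P) \<noteq> 0"
  proof
    assume "(\<integral>\<^sup>+\<omega>. ennreal (X \<omega>) \<partial>P) = 0"
    then have "AE \<omega> in P. X \<omega> = 0"
      using X01 by (subst (asm) nn_integral_0_iff_AE) (auto elim!: AE_mp intro!: AE_I2)
    then have "measure P {\<omega> \<in> space P. X \<omega> = 0} = 1"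
      by (subst P.prob_Collect_eq_1) auto
    with X0 show False
      by simp
  qed
  moreover have "a < 1" if "a + b = 1" "b \<noteq> 0" for a b :: ennreal
    using that by (metis add.commute add_0 add_mono1 ennreal_add_left_cancel_less not_gr_zero)
  ultimately show ?thesis
    using sum by blast
qed

theorem mainTheorem6:
  fixes M :: "'a measure" and P :: "'w measure"
    and \<eta> :: "'w \<Rightarrow> 'a measure" and X :: "'w \<Rightarrow> real"
  assumes "prob_space P"
    and "\<eta> \<in> measurable P (prob_algebra M)"
    and "X \<in> measurable P (restrict_space borel {0..1})"
    and "measure P {\<omega> \<in> space P. X \<omega> = 0} < 1"
  shows "\<exists>!L. prob_space L \<and> sets L = sets (prob_algebra M) \<and>
           L = distr (distr P (prob_algebra M \<Otimes>\<^sub>M restrict_space borel {0..1}) (\<lambda>\<omega>. (\<eta> \<omega>, X \<omega>)) \<Otimes>\<^sub>M L)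
                     (prob_algebra M) (\<lambda>((e, x), v). mix_measure M x e v)"
proof -
  define Q where "Q = distr P (prob_algebra M \<Otimes>\<^sub>M unit_interval) (\<lambda>\<omega>. (\<eta> \<omega>, X \<omega>))"
  have [measurable]: "(\<lambda>\<omega>. (\<eta> \<omega>, X \<omega>)) \<in> P \<rightarrow>\<^sub>M prob_algebra M \<Otimes>\<^sub>M unit_interval"
    using assms(2,3) by measurable
  have "prob_space Q"
    unfolding Q_def by (rule prob_space.prob_space_distr[OF assms(1)]) measurable
  then interpret random_mixture M Q
    by (rule random_mixture.intro) (simp add: Q_def)
  have "contraction_factor = (\<integral>\<^sup>+\<omega>. ennreal (1 - X \<omega>) \<partial>P)"
    unfolding contraction_factor_def unfolding Q_def by (subst nn_integral_distr) measurable
  also have "\<dots> < 1"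
    using assms(1,3,4) by (rule nn_integral_one_minus_less_1)
  finally have "\<exists>!L. stationary L"
    using stationary_stick_breaking_law stationary_unique by (intro ex1I) blast+
  then show ?thesis
    unfolding stationary_def mixing_map_def by (simp only: Q_def)
qed

end
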